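(* Let $\mathbf A$ be a Mal'cev algebra, $n\ge1$, $\alpha_0,\dots,\alpha_{n-1}$ congruences of $\mathbf A$, and $a,b\in A$. The following are equivalent: (1) $(a,b)\in\psi_{2^n-1}(\Delta(\alpha_0,\dots,\alpha_{n-1}))$; (2) the $2^n$-tuple $(a,\dots,a,b)$ (all coordinates $a$ except the last, which is $b$) belongs to $\Delta(\alpha_0,\dots,\alpha_{n-1})$; (3) there exist $c_0,\dots,c_{2^{n-1}-2}\in A$ such that $(c_0,\dots,c_{2^{n-1}-2},a,c_0,\dots,c_{2^{n-1}-2},b)\in\Delta(\alpha_0,\dots,\alpha_{n-1})$; (4) $(a,b)\in[\alpha_0,\dots,\alpha_{n-1}]$.
   Context: A Mal'cev algebra is an algebra with a ternary term operation $q$ satisfying $q(x,x,y)=y=q(y,x,x)$. Higher commutator (Bulatov): for congruences $\alpha_0,\dots,\alpha_{n-1},\gamma$, say $\alpha_0,\dots,\alpha_{n-2}$ centralize $\alpha_{n-1}$ modulo $\gamma$ if for all tuples $\mathbf a_i,\mathbf b_i$ ($i<n$, with $\mathbf a_i\neq\mathbf b_i$ congruent modulo $\alpha_i$ coordinatewise) and every term operation $t$ such that $t(\mathbf x_0,\dots,\mathbf x_{n-2},\mathbf a_{n-1})\equiv_\gamma t(\mathbf x_0,\dots,\mathbf x_{n-2},\mathbf b_{n-1})$ for all $(\mathbf x_0,\dots,\mathbf x_{n-2})\in(\{\mathbf a_0,\mathbf b_0\}\times\dots\times\{\mathbf a_{n-2},\mathbf b_{n-2}\})\setminus\{(\mathbf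 b_0,\dots,\mathbf b_{n-2})\}$, we have $t(\mathbf b_0,\dots,\mathbf b_{n-2},\mathbf a_{n-1})\equiv_\gamma t(\mathbf b_0,\dots,\mathbf b_{n-2},\mathbf b_{n-1})$. $[\alpha_0,\dots,\alpha_{n-1}]$ is the smallest congruence $\gamma$ such that $\alpha_0,\dots,\alpha_{n-2}$ centralize $\alpha_{n-1}$ modulo $\gamma$. Tuples in $A^m$ are indexed by $0,\dots,m-1$; $k_{(i)}$ is the $i$-th binary digit of $k$ (least significant is $i=0$). For $a,b\in A$ and $i<n$, $\mathbf c_i^n(a,b)\in A^{2^n}$ has $k$-th coordinate $a$ if $k_{(i)}=0$ and $b$ if $k_{(i)}=1$. $\Delta(\alpha_0,\dots,\alpha_{n-1})$ is the subuniverse of $\mathbf A^{2^n}$ generated by $\{\mathbf c_i^n(a,b): i<n,\ (a,b)\in\alpha_i\}$. Forks: for $R\subseteq A^m$ and $i<m$, $\psi_i(R)$ is the set of pairs $(a,b)$ for which there exist $\mathbf c,\mathbf d\in R$ with $c_i=a$, $d_i=b$, and $c_k=d_k$ for all $k\neq i$. *)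

theory Defs
  imports Main
begin

definition is_algebra :: "'a set \<Rightarrow> ('f \<Rightarrow> nat) \<Rightarrow> ('f \<Rightarrow> 'a list \<Rightarrow> 'a) \<Rightarrow> bool" where
  "is_algebra A ar ops \<longleftrightarrow> A \<noteq> {} \<and>
     (\<forall>f xs. length xs = ar f \<and> set xs \<subseteq> A \<longrightarrow> ops f xs \<in> A)"

inductive_set clo :: "('f \<Rightarrow> nat) \<Rightarrow> ('f \<Rightarrow> 'a list \<Rightarrow> 'a) \<Rightarrow> nat \<Rightarrow> ('a list \<Rightarrow> 'a) set"
  for ar ops k where
  proj: "i < k \<Longrightarrow> (\<lambda>xs. xs ! i) \<in> clo ar ops k"
| app: "(\<And>j. j < ar f \<Longrightarrow> ts j \<in> clo ar ops k) \<Longrightarrow>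
        (\<lambda>xs. ops f (map (\<lambda>j. ts j xs) [0..<ar f])) \<in> clo ar ops k"

definition malcev :: "'a set \<Rightarrow> ('f \<Rightarrow> nat) \<Rightarrow> ('f \<Rightarrow> 'a list \<Rightarrow> 'a) \<Rightarrow> bool" where
  "malcev A ar ops \<longleftrightarrow> is_algebra A ar ops \<and>
     (\<exists>q\<in>clo ar ops 3. \<forall>x\<in>A. \<forall>y\<in>A. q [x, x, y] = y \<and> q [y, x, x] = y)"

definition congruence :: "'a set \<Rightarrow> ('f \<Rightarrow> nat) \<Rightarrow> ('f \<Rightarrow> 'a list \<Rightarrow> 'a) \<Rightarrow> 'a rel \<Rightarrow> bool" where
  "congruence A ar ops \<theta> \<longleftrightarrow> equiv A \<theta> \<and>
     (\<forall>f xs ys. length xs = ar f \<and> length ys = ar f \<and> (\<forall>i<ar f. (xs ! i, ys ! i) \<in> \<theta>)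
        \<longrightarrow> (ops f xs, ops f ys) \<in> \<theta>)"

definition comm_args :: "nat \<Rightarrow> (nat \<Rightarrow> 'a list) \<Rightarrow> (nat \<Rightarrow> 'a list) \<Rightarrow> (nat \<Rightarrow> bool) \<Rightarrow> 'a list \<Rightarrow> 'a list" where
  "comm_args n as bs s lst =
     concat (map (\<lambda>i. if i < n - 1 then (if s i then bs i else as i) else lst) [0..<n])"

text \<open>alpha_0,...,alpha_{n-2} centralize alpha_{n-1} modulo gamma (Bulatov).\<close>
definition centralizes :: "'a set \<Rightarrow> ('f \<Rightarrow> nat) \<Rightarrow> ('f \<Rightarrow> 'a list \<Rightarrow> 'a) \<Rightarrow> nat \<Rightarrow> (nat \<Rightarrow> 'a rel) \<Rightarrow> 'a rel \<Rightarrow> bool" where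
  "centralizes A ar ops n \<alpha> \<gamma> \<longleftrightarrow>
    (\<forall>ms as bs t.
       (\<forall>i<n. length (as i) = ms i \<and> length (bs i) = ms i \<and> as i \<noteq> bs i \<and>
              set (as i) \<subseteq> A \<and> set (bs i) \<subseteq> A \<and>
              (\<forall>k<ms i. (as i ! k, bs i ! k) \<in> \<alpha> i))
       \<and> t \<in> clo ar ops (\<Sum>i<n. ms i)
       \<and> (\<forall>s. (\<exists>i<n - 1. \<not> s i) \<longrightarrow>
              (t (comm_args n as bs s (as (n - 1))), t (comm_args n as bs s (bs (n - 1)))) \<in> \<gamma>)
     \<longrightarrow> (t (comm_args n as bs (\<lambda>_. True) (as (n - 1))),
          t (comm_args n as bs (\<lambda>_. True) (bs (n - 1)))) \<in> \<gamma>)"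

definition commutator :: "'a set \<Rightarrow> ('f \<Rightarrow> nat) \<Rightarrow> ('f \<Rightarrow> 'a list \<Rightarrow> 'a) \<Rightarrow> nat \<Rightarrow> (nat \<Rightarrow> 'a rel) \<Rightarrow> 'a rel" where
  "commutator A ar ops n \<alpha> =
     \<Inter> {\<gamma>. congruence A ar ops \<gamma> \<and> centralizes A ar ops n \<alpha> \<gamma>}"

definition cvec :: "nat \<Rightarrow> nat \<Rightarrow> 'a \<Rightarrow> 'a \<Rightarrow> 'a list" where
  "cvec n i a b = map (\<lambda>k. if bit k i then b else a) [0..<2 ^ n]"

inductive_set Delta :: "('f \<Rightarrow> nat) \<Rightarrow> ('f \<Rightarrow> 'a list \<Rightarrow> 'a) \<Rightarrow> nat \<Rightarrow> (nat \<Rightarrow> 'a rel) \<Rightarrow> 'a list set"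
  for ar ops n \<alpha> where
  gen: "i < n \<Longrightarrow> (a, b) \<in> \<alpha> i \<Longrightarrow> cvec n i a b \<in> Delta ar ops n \<alpha>"
| app: "(\<And>j. j < ar f \<Longrightarrow> vs j \<in> Delta ar ops n \<alpha>) \<Longrightarrow>
        map (\<lambda>k. ops f (map (\<lambda>j. vs j ! k) [0..<ar f])) [0..<2 ^ n] \<in> Delta ar ops n \<alpha>"

definition fork :: "nat \<Rightarrow> nat \<Rightarrow> 'a list set \<Rightarrow> 'a rel" where
  "fork m i R = {(x, y). \<exists>c\<in>R. \<exists>d\<in>R. length c = m \<and> length d = m \<and>
       c ! i = x \<and> d ! i = y \<and> (\<forall>k<m. k \<noteq> i \<longrightarrow> c ! k = d ! k)}"

end

theory Submission
  imports Defs
begin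

text \<open>
  \<open>\<Delta>\<close> is closed under the Mal'cev operation, contains the constant tuples, and is invariant
  under the symmetries \<open>k \<mapsto> k XOR d\<close> of the cube \<open>{0,1}\<^sup>n\<close> and under folding onto its
  lower half \<open>k \<mapsto> k mod 2\<^sup>n\<^sup>-\<^sup>1\<close>. Applying the Mal'cev operation to a fork at the last coordinate
  (or to a fold of a tuple that is \<open>2\<^sup>n\<^sup>-\<^sup>1\<close>-periodic except at the last coordinate) produces
  the corner tuple \<open>(a,\<dots>,a,b)\<close>; this gives (1) \<open>\<Longleftrightarrow>\<close> (2) \<open>\<Longleftrightarrow>\<close> (3).

  The relation \<open>R = {(a,b). (a,\<dots>,a,b) \<in> \<Delta>}\<close> is a congruence. Evaluating a term at the
  generators of \<open>\<Delta>\<close> turns the hypotheses of the centrality condition into \<open>R\<close>-relations between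
  the lower and upper halves of a tuple of \<open>\<Delta>\<close>, except at the last pair; using these relations one
  at a time to overwrite the upper half by the lower one makes the tuple periodic, which forces the
  last pair into \<open>R\<close> as well. So \<open>R\<close> is among the congruences defining the commutator.
  Conversely every tuple of \<open>\<Delta>\<close> is a term evaluated at generators, which is exactly the shape of the
  centrality condition, so a corner tuple in \<open>\<Delta>\<close> puts \<open>(a,b)\<close> into every such congruence; if
  some \<open>\<alpha>\<^sub>i\<close> is the identity, \<open>\<Delta>\<close> does not see bit \<open>i\<close> and the corner tuple is constant.
\<close>

lemma bit_less_exp_imp_less:
  fixes k :: nat
  assumes "k < 2 ^ m" and "bit k i"
  shows "i < m"
  using assms by (metis bit_take_bit_iff take_bit_nat_eq_self_iff)

lemma all_bits_iff_eq_exp_minus_1: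
  fixes k :: nat
  assumes "k < 2 ^ m"
  shows "(\<forall>i<m. bit k i) \<longleftrightarrow> k = 2 ^ m - 1"
proof
  assume "\<forall>i<m. bit k i"
  then have "k = mask m"
    using bit_less_exp_imp_less[OF assms] by (intro bit_eqI) (auto simp: bit_mask_iff)
  then show "k = 2 ^ m - 1" by (simp add: mask_eq_exp_minus_1)
next
  assume "k = 2 ^ m - 1"
  then have "k = mask m" by (simp add: mask_eq_exp_minus_1)
  then show "\<forall>i<m. bit k i" by (simp add: bit_mask_iff)
qed

lemma ex_nat_with_bits: "\<exists>k::nat. k < 2 ^ m \<and> (\<forall>i<m. bit k i \<longleftrightarrow> P i)"
proof (induction m arbitrary: P)
  case 0
  then show ?case by auto
next
  case (Suc m)
  obtain k :: nat where k: "k < 2 ^ m" "\<forall>i<m. bit k i \<longleftrightarrow> P (Suc i)"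
    using Suc[of "P \<circ> Suc"] by auto
  have "of_bool (P 0) + 2 * k < 2 ^ Suc m"
    using k(1) by (cases "P 0") auto
  moreover have "\<forall>i<Suc m. bit (of_bool (P 0) + 2 * k) i \<longleftrightarrow> P i"
    using k(2) by (auto simp: bit_0 bit_Suc less_Suc_eq_0_disj)
  ultimately show ?case by blast
qed

lemma bit_add_exp_nat: "(k::nat) < 2 ^ m \<Longrightarrow> bit (k + 2 ^ m) i \<longleftrightarrow> i = m \<or> bit k i"
  by (subst bit_disjunctive_add_iff) (auto simp: bit_exp_iff dest: bit_less_exp_imp_less)

lemma xor_less_exp_nat: "(x::nat) < 2 ^ m \<Longrightarrow> y < 2 ^ m \<Longrightarrow> xor x y < 2 ^ m"
  by (metis take_bit_nat_eq_self_iff take_bit_nat_less_exp take_bit_xor)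

lemma xor_xor_eq_left_iff: "xor (j::nat) (xor a b) = a \<longleftrightarrow> j = b"
  by (auto simp: bit_eq_iff bit_xor_iff)

lemma nth_concat_uniform:
  assumes "\<And>i. i < m \<Longrightarrow> length (F i) = L" and "i < m" and "j < L"
  shows "concat (map F [0..<m]) ! (i * L + j) = F i ! j"
proof -
  have "[0..<m] = [0..<i] @ i # [Suc i..<m]"
    using assms(2) upt_add_eq_append[of 0 i "m - i"] upt_conv_Cons[of i m] by simp
  moreover have "length (concat (map F [0..<i])) = i * L"
    using assms(1,2) by (simp add: length_concat interv_sum_list_conv_sum_set_nat)
  ultimately show ?thesis using assms by (simp add: nth_append)
qed

lemma mult_add_less_mult_nat: "(i::nat) < m \<Longrightarrow> j < n \<Longrightarrow> i * n + j < m * n"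
proof -
  assume "i < m" "j < n"
  then have "i * n + j < Suc i * n" by simp
  also have "\<dots> \<le> m * n" using \<open>i < m\<close> by (intro mult_right_mono) auto
  finally show ?thesis .
qed

lemma clo_rename:
  assumes "t \<in> clo ar ops m" and "\<And>p. p < m \<Longrightarrow> \<sigma> p < M"
  shows "(\<lambda>xs. t (map (\<lambda>p. xs ! \<sigma> p) [0..<m])) \<in> clo ar ops M"
  using assms(1)
proof (induction rule: clo.induct)
  case (proj i)
  then show ?case using assms(2) by (simp add: clo.proj)
next
  case (app f ts)
  then show ?case
    using clo.app[where f = f and ts = "\<lambda>j xs. ts j (map (\<lambda>p. xs ! \<sigma> p) [0..<m])"] by simp
qed

lemma length_cvec [simp]: "length (cvec m i a b) = 2 ^ m"
  by (simp add: cvec_def)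

lemma nth_cvec [simp]: "k < 2 ^ m \<Longrightarrow> cvec m i a b ! k = (if bit k i then b else a)"
  by (simp add: cvec_def)

definition bit_args :: "nat \<Rightarrow> (nat \<Rightarrow> 'a list) \<Rightarrow> (nat \<Rightarrow> 'a list) \<Rightarrow> nat \<Rightarrow> 'a list" where
  "bit_args n as bs k = concat (map (\<lambda>i. if bit k i then bs i else as i) [0..<n])"

lemma comm_args_eq_bit_args:
  assumes "\<forall>i<n - 1. bit k i \<longleftrightarrow> s i"
  shows "comm_args n as bs s (if bit k (n - 1) then bs (n - 1) else as (n - 1)) = bit_args n as bs k"
  unfolding comm_args_def bit_args_def
proof (intro arg_cong[where f = concat] map_cong refl)
  fix i assume "i \<in> set [0..<n]"
  then have "i < n - 1 \<or> i = n - 1" by auto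
  then show "(if i < n - 1 then if s i then bs i else as i
      else if bit k (n - 1) then bs (n - 1) else as (n - 1)) = (if bit k i then bs i else as i)"
    using assms by auto
qed

lemma nth_bit_args:
  assumes "\<And>i. i < n \<Longrightarrow> length (as i) = L \<and> length (bs i) = L" and "i < n" and "p < L"
  shows "bit_args n as bs k ! (i * L + p) = (if bit k i then bs i else as i) ! p"
  unfolding bit_args_def using assms by (intro nth_concat_uniform) auto

lemma bit_args_lower_half:
  assumes "k < 2 ^ (n - 1)" and "\<forall>i<n - 1. bit k i \<longleftrightarrow> s i"
  shows "bit_args n as bs k = comm_args n as bs s (as (n - 1))"
proof -
  have "\<not> bit k (n - 1)"
    using assms(1) bit_less_exp_imp_less by blast
  then show ?thesis
    using comm_args_eq_bit_args[OF assms(2), of as bs] by simp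
qed

lemma bit_args_upper_half:
  assumes "k < 2 ^ (n - 1)" and "\<forall>i<n - 1. bit k i \<longleftrightarrow> s i"
  shows "bit_args n as bs (k + 2 ^ (n - 1)) = comm_args n as bs s (bs (n - 1))"
proof -
  have "bit (k + 2 ^ (n - 1)) i \<longleftrightarrow> i = n - 1 \<or> bit k i" for i
    using assms(1) by (rule bit_add_exp_nat)
  then show ?thesis
    using comm_args_eq_bit_args[of n "k + 2 ^ (n - 1)" s as bs] assms(2) by simp
qed

lemma comm_args_as_bit_args:
  assumes "n \<ge> 1"
  obtains k :: nat where "k < 2 ^ n" and "k = 2 ^ n - 1 \<longleftrightarrow> (\<forall>i<n - 1. s i) \<and> e"
    and "comm_args n as bs s (if e then bs (n - 1) else as (n - 1)) = bit_args n as bs k"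
proof -
  obtain k :: nat where k: "k < 2 ^ n" "\<forall>i<n. bit k i \<longleftrightarrow> (if i < n - 1 then s i else e)"
    using ex_nat_with_bits[of n "\<lambda>i. if i < n - 1 then s i else e"] by blast
  have split_n: "(\<forall>i<n. P i) \<longleftrightarrow> (\<forall>i<n - 1. P i) \<and> P (n - 1)" for P
    using assms by (cases n) (auto simp: less_Suc_eq)
  have s: "\<forall>i<n - 1. bit k i \<longleftrightarrow> s i"
    using k(2) by (metis diff_le_self order_less_le_trans)
  have e: "bit k (n - 1) \<longleftrightarrow> e"
    using k(2) assms by simp
  have "k = 2 ^ n - 1 \<longleftrightarrow> (\<forall>i<n - 1. s i) \<and> e"
    using all_bits_iff_eq_exp_minus_1[OF k(1)] split_n[of "bit k"] s e by simp
  moreover have "comm_args n as bs s (if e then bs (n - 1) else as (n - 1)) = bit_args n as bs k"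
    using comm_args_eq_bit_args[OF s, of as bs] e by simp
  ultimately show ?thesis using that k(1) by blast
qed

definition generator_coord :: "nat \<times> 'a \<times> 'a \<Rightarrow> nat \<Rightarrow> 'a" where
  "generator_coord g k = (if bit k (fst g) then snd (snd g) else fst (snd g))"

locale commutator_setting =
  fixes A :: "'a set" and ar :: "'f \<Rightarrow> nat" and ops :: "'f \<Rightarrow> 'a list \<Rightarrow> 'a"
    and n :: nat and \<alpha> :: "nat \<Rightarrow> 'a rel"
  assumes algebra: "is_algebra A ar ops"
    and n_ge_1: "n \<ge> 1"
    and congruence: "\<And>i. i < n \<Longrightarrow> congruence A ar ops (\<alpha> i)"
begin

abbreviation \<Delta> :: "'a list set" where
  "\<Delta> \<equiv> Delta ar ops n \<alpha>"

lemma ops_closed: "length xs = ar f \<Longrightarrow> set xs \<subseteq> A \<Longrightarrow> ops f xs \<in> A"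
  using algebra by (simp add: is_algebra_def)

lemma alpha_equiv: "i < n \<Longrightarrow> equiv A (\<alpha> i)"
  using congruence by (simp add: congruence_def)

lemma alpha_in_A: "i < n \<Longrightarrow> (x, y) \<in> \<alpha> i \<Longrightarrow> x \<in> A \<and> y \<in> A"
  using alpha_equiv by (auto simp: equiv_def)

lemma alpha_refl: "i < n \<Longrightarrow> x \<in> A \<Longrightarrow> (x, x) \<in> \<alpha> i"
  using alpha_equiv by (auto simp: equiv_def refl_on_def)

lemma alpha_sym: "i < n \<Longrightarrow> (x, y) \<in> \<alpha> i \<Longrightarrow> (y, x) \<in> \<alpha> i"
  using alpha_equiv by (auto simp: equiv_def sym_def)

lemma exp_eq_double_half: "(2::nat) ^ n = 2 * 2 ^ (n - 1)"
  using n_ge_1 by (cases n) auto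

lemma Delta_tuple: "v \<in> \<Delta> \<Longrightarrow> length v = 2 ^ n \<and> set v \<subseteq> A"
proof (induction rule: Delta.induct)
  case (gen i a b)
  then show ?case using alpha_in_A[of i a b] by (auto simp: cvec_def)
next
  case (app f vs)
  have "ops f (map (\<lambda>j. vs j ! k) [0..<ar f]) \<in> A" if "k < 2 ^ n" for k
    using app.IH that by (intro ops_closed) (auto simp: subset_iff)
  then show ?case by auto
qed

lemma length_Delta: "v \<in> \<Delta> \<Longrightarrow> length v = 2 ^ n"
  using Delta_tuple by blast

lemma nth_Delta_in_A: "v \<in> \<Delta> \<Longrightarrow> k < 2 ^ n \<Longrightarrow> v ! k \<in> A"
  using Delta_tuple by (metis nth_mem subsetD)

lemma Delta_term:
  assumes "t \<in> clo ar ops m" and "\<And>p. p < m \<Longrightarrow> vs p \<in> \<Delta>"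
  shows "map (\<lambda>k. t (map (\<lambda>p. vs p ! k) [0..<m])) [0..<2 ^ n] \<in> \<Delta>"
  using assms(1)
proof (induction rule: clo.induct)
  case (proj i)
  then have "map (\<lambda>k. vs i ! k) [0..<2 ^ n] = vs i"
    using assms(2) length_Delta by (metis map_nth)
  then show ?case using proj assms(2) by simp
next
  case (app f ts)
  let ?w = "\<lambda>j. map (\<lambda>k. ts j (map (\<lambda>p. vs p ! k) [0..<m])) [0..<2 ^ n]"
  have "map (\<lambda>k. ops f (map (\<lambda>j. ?w j ! k) [0..<ar f])) [0..<2 ^ n] \<in> \<Delta>"
    using app.IH by (rule Delta.app)
  moreover have "map (\<lambda>k. ops f (map (\<lambda>j. ?w j ! k) [0..<ar f])) [0..<2 ^ n]
      = map (\<lambda>k. ops f (map (\<lambda>j. ts j (map (\<lambda>p. vs p ! k) [0..<m])) [0..<ar f])) [0..<2 ^ n]"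
    by (rule map_cong) auto
  ultimately show ?case by simp
qed

lemma replicate_in_Delta: "a \<in> A \<Longrightarrow> replicate (2 ^ n) a \<in> \<Delta>"
  using Delta.gen[of 0 n a a \<alpha> ar ops] n_ge_1 alpha_refl
  by (simp add: cvec_def map_replicate_const)

lemma Delta_reindex:
  assumes \<sigma>: "\<And>k. k < 2 ^ n \<Longrightarrow> \<sigma> k < 2 ^ n"
    and gens: "\<And>i a b. i < n \<Longrightarrow> (a, b) \<in> \<alpha> i \<Longrightarrow> map (\<lambda>k. cvec n i a b ! \<sigma> k) [0..<2 ^ n] \<in> \<Delta>"
    and v: "v \<in> \<Delta>"
  shows "map (\<lambda>k. v ! \<sigma> k) [0..<2 ^ n] \<in> \<Delta>"
  using v
proof (induction rule: Delta.induct)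
  case (gen i a b)
  then show ?case using gens by blast
next
  case (app f vs)
  let ?w = "\<lambda>j. map (\<lambda>k. vs j ! \<sigma> k) [0..<2 ^ n]"
  have "map (\<lambda>k. ops f (map (\<lambda>j. ?w j ! k) [0..<ar f])) [0..<2 ^ n] \<in> \<Delta>"
    using app.IH by (rule Delta.app)
  moreover have "map (\<lambda>k. ops f (map (\<lambda>j. ?w j ! k) [0..<ar f])) [0..<2 ^ n]
      = map (\<lambda>k. map (\<lambda>k. ops f (map (\<lambda>j. vs j ! k) [0..<ar f])) [0..<2 ^ n] ! \<sigma> k) [0..<2 ^ n]"
    by (rule map_cong) (auto simp: \<sigma>)
  ultimately show ?case by simp
qed

lemma Delta_reindex_xor:
  assumes "d < 2 ^ n" and "v \<in> \<Delta>"
  shows "map (\<lambda>k. v ! xor k d) [0..<2 ^ n] \<in> \<Delta>"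
proof (rule Delta_reindex[OF _ _ assms(2)])
  fix i a b assume i: "i < n" and ab: "(a, b) \<in> \<alpha> i"
  have "map (\<lambda>k. cvec n i a b ! xor k d) [0..<2 ^ n] = (if bit d i then cvec n i b a else cvec n i a b)"
    using assms(1) by (intro nth_equalityI) (auto simp: xor_less_exp_nat bit_xor_iff)
  then show "map (\<lambda>k. cvec n i a b ! xor k d) [0..<2 ^ n] \<in> \<Delta>"
    using i ab alpha_sym by (auto intro: Delta.gen)
qed (use assms(1) xor_less_exp_nat in blast)

lemma Delta_reindex_mod_half:
  assumes "v \<in> \<Delta>"
  shows "map (\<lambda>k. v ! (k mod 2 ^ (n - 1))) [0..<2 ^ n] \<in> \<Delta>"
proof (rule Delta_reindex[OF _ _ assms])
  show mod_less: "k mod 2 ^ (n - 1) < (2::nat) ^ n" for k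
  proof -
    have "k mod 2 ^ (n - 1) < (2::nat) ^ (n - 1)" by simp
    then show ?thesis using exp_eq_double_half by linarith
  qed
  fix i a b assume i: "i < n" and ab: "(a, b) \<in> \<alpha> i"
  have "map (\<lambda>k. cvec n i a b ! (k mod 2 ^ (n - 1))) [0..<2 ^ n] = cvec n i a (if i < n - 1 then b else a)"
    using mod_less by (intro nth_equalityI) (auto simp: bit_take_bit_iff simp flip: take_bit_eq_mod)
  then show "map (\<lambda>k. cvec n i a b ! (k mod 2 ^ (n - 1))) [0..<2 ^ n] \<in> \<Delta>"
    using i ab alpha_refl alpha_in_A by (auto intro: Delta.gen)
qed

lemma nth_Delta_eq_if_bits_agree:
  assumes trivial: "\<alpha> i0 \<subseteq> Id" and v: "v \<in> \<Delta>"
  shows "j < 2 ^ n \<Longrightarrow> j' < 2 ^ n \<Longrightarrow> (\<forall>i<n. i \<noteq> i0 \<longrightarrow> bit j i = bit j' i) \<Longrightarrow> v ! j = v ! j'"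
  using v
proof (induction arbitrary: j j' rule: Delta.induct)
  case (gen i a b)
  then show ?case using trivial by (cases "i = i0") auto
next
  case (app f vs j j')
  have "vs l ! j = vs l ! j'" if "l < ar f" for l
    using app.IH[OF that] app.prems by blast
  then have "map (\<lambda>l. vs l ! j) [0..<ar f] = map (\<lambda>l. vs l ! j') [0..<ar f]"
    by (rule map_cong[OF refl]) simp
  then show ?case using app.prems by (simp del: map_eq_conv)
qed

definition corner :: "'a \<Rightarrow> 'a \<Rightarrow> 'a list" where
  "corner x y = replicate (2 ^ n - 1) x @ [y]"

lemma length_corner [simp]: "length (corner x y) = 2 ^ n"
  by (simp add: corner_def)

lemma nth_corner: "k < 2 ^ n \<Longrightarrow> corner x y ! k = (if k = 2 ^ n - 1 then y else x)"
  by (auto simp: corner_def nth_append)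

lemma corner_same: "corner x x = replicate (2 ^ n) x"
  by (rule nth_equalityI) (auto simp: nth_corner)

lemma corner_eq_if_alpha_trivial:
  assumes "i0 < n" and "\<alpha> i0 \<subseteq> Id" and "corner a b \<in> \<Delta>"
  shows "a = b"
proof -
  obtain j :: nat where j: "j < 2 ^ n" "\<forall>i<n. bit j i \<longleftrightarrow> i \<noteq> i0"
    using ex_nat_with_bits[of n "\<lambda>i. i \<noteq> i0"] by blast
  have "j \<noteq> 2 ^ n - 1"
    using j assms(1) all_bits_iff_eq_exp_minus_1[of j n] by auto
  moreover have "corner a b ! (2 ^ n - 1) = corner a b ! j"
    using j all_bits_iff_eq_exp_minus_1[of "2 ^ n - 1" n]
    by (intro nth_Delta_eq_if_bits_agree[OF assms(2,3)]) auto
  ultimately show ?thesis using j(1) by (simp add: nth_corner)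
qed

definition related_tuples :: "(nat \<Rightarrow> nat) \<Rightarrow> (nat \<Rightarrow> 'a list) \<Rightarrow> (nat \<Rightarrow> 'a list) \<Rightarrow> bool" where
  "related_tuples ms as bs \<longleftrightarrow> (\<forall>i<n. length (as i) = ms i \<and> length (bs i) = ms i \<and>
     set (as i) \<subseteq> A \<and> set (bs i) \<subseteq> A \<and> (\<forall>k<ms i. (as i ! k, bs i ! k) \<in> \<alpha> i))"

lemma centralizesI:
  assumes "\<And>ms as bs t. related_tuples ms as bs \<Longrightarrow> t \<in> clo ar ops (\<Sum>i<n. ms i) \<Longrightarrow>
      (\<And>s. \<exists>i<n - 1. \<not> s i \<Longrightarrow>
         (t (comm_args n as bs s (as (n - 1))), t (comm_args n as bs s (bs (n - 1)))) \<in> \<gamma>) \<Longrightarrow>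
      (t (comm_args n as bs (\<lambda>_. True) (as (n - 1))),
       t (comm_args n as bs (\<lambda>_. True) (bs (n - 1)))) \<in> \<gamma>"
  shows "centralizes A ar ops n \<alpha> \<gamma>"
  unfolding centralizes_def
  by (intro allI impI, elim conjE, rule assms) (auto simp: related_tuples_def)

lemma centralizesD:
  assumes "centralizes A ar ops n \<alpha> \<gamma>" and "related_tuples ms as bs"
    and "\<And>i. i < n \<Longrightarrow> as i \<noteq> bs i" and "t \<in> clo ar ops (\<Sum>i<n. ms i)"
    and "\<And>s. \<exists>i<n - 1. \<not> s i \<Longrightarrow>
      (t (comm_args n as bs s (as (n - 1))), t (comm_args n as bs s (bs (n - 1)))) \<in> \<gamma>"
  shows "(t (comm_args n as bs (\<lambda>_. True) (as (n - 1))),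
          t (comm_args n as bs (\<lambda>_. True) (bs (n - 1)))) \<in> \<gamma>"
  using assms unfolding centralizes_def related_tuples_def by blast

lemma bit_args_term_in_Delta:
  assumes rel: "related_tuples ms as bs" and t: "t \<in> clo ar ops (\<Sum>i<n. ms i)"
  shows "map (\<lambda>k. t (bit_args n as bs k)) [0..<2 ^ n] \<in> \<Delta>"
proof -
  define G where "G = concat (map (\<lambda>i. map (\<lambda>j. cvec n i (as i ! j) (bs i ! j)) [0..<ms i]) [0..<n])"
  have length_G: "length G = (\<Sum>i<n. ms i)"
    by (simp add: G_def length_concat comp_def sum_list_sum_nth atLeast0LessThan)
  have "G ! p \<in> \<Delta>" if p: "p < length G" for p
  proof -
    obtain i j where "i < n" "j < ms i" "G ! p = cvec n i (as i ! j) (bs i ! j)"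
      using nth_mem[OF p] unfolding G_def by auto
    then show ?thesis using rel by (auto simp: related_tuples_def intro: Delta.gen)
  qed
  then have "map (\<lambda>k. t (map (\<lambda>p. G ! p ! k) [0..<length G])) [0..<2 ^ n] \<in> \<Delta>"
    using t length_G by (intro Delta_term) auto
  moreover have "map (\<lambda>p. G ! p ! k) [0..<length G] = bit_args n as bs k" if k: "k < 2 ^ n" for k
  proof -
    have "map (\<lambda>j. cvec n i (as i ! j) (bs i ! j) ! k) [0..<ms i] = (if bit k i then bs i else as i)"
      if "i < n" for i
      using rel k that by (intro nth_equalityI) (auto simp: related_tuples_def)
    then have "map (\<lambda>g. g ! k) G = bit_args n as bs k"
      unfolding G_def bit_args_def map_concat map_map comp_def
      by (intro arg_cong[where f = concat] map_cong) auto
    moreover have "map (\<lambda>p. G ! p ! k) [0..<length G] = map (\<lambda>g. g ! k) G"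
      by (rule nth_equalityI) simp_all
    ultimately show ?thesis by simp
  qed
  then have "map (\<lambda>k. t (map (\<lambda>p. G ! p ! k) [0..<length G])) [0..<2 ^ n]
      = map (\<lambda>k. t (bit_args n as bs k)) [0..<2 ^ n]"
    by (intro map_cong) auto
  ultimately show ?thesis by simp
qed

definition is_generator :: "nat \<times> 'a \<times> 'a \<Rightarrow> bool" where
  "is_generator g \<longleftrightarrow> fst g < n \<and> snd g \<in> \<alpha> (fst g)"

definition generated_tuple :: "nat \<Rightarrow> (nat \<Rightarrow> nat \<times> 'a \<times> 'a) \<Rightarrow> ('a list \<Rightarrow> 'a) \<Rightarrow> 'a list" where
  "generated_tuple m gs t = map (\<lambda>k. t (map (\<lambda>p. generator_coord (gs p) k) [0..<m])) [0..<2 ^ n]"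

lemma generated_tuple_ops:
  assumes gens: "\<And>j p. j < ar f \<Longrightarrow> is_generator (gs j p)"
    and terms: "\<And>j. j < ar f \<Longrightarrow> ts j \<in> clo ar ops (ms j)"
  shows "\<exists>m gs' t. (\<forall>p. is_generator (gs' p)) \<and> t \<in> clo ar ops m \<and>
    map (\<lambda>k. ops f (map (\<lambda>j. generated_tuple (ms j) (gs j) (ts j) ! k) [0..<ar f])) [0..<2 ^ n]
      = generated_tuple m gs' t"
proof -
  define K where "K = Suc (\<Sum>j<ar f. ms j)"
  have ms_less: "ms j < K" if "j < ar f" for j
    using that member_le_sum[of j "{..<ar f}" ms] by (simp add: K_def)
  have block: "j * K + p < ar f * K" if "j < ar f" "p < ms j" for j p
    using that ms_less[OF that(1)] by (intro mult_add_less_mult_nat) auto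
  obtain a0 where a0: "a0 \<in> A"
    using algebra by (auto simp: is_algebra_def)
  define gs' where "gs' p = (if p div K < ar f then gs (p div K) (p mod K) else (0, a0, a0))" for p
  define t where "t xs = ops f (map (\<lambda>j. ts j (map (\<lambda>p. xs ! (j * K + p)) [0..<ms j])) [0..<ar f])"
    for xs
  have "is_generator (gs' p)" for p
  proof (cases "p div K < ar f")
    case True
    then show ?thesis using gens by (simp add: gs'_def)
  next
    case False
    then show ?thesis using n_ge_1 alpha_refl[OF _ a0] by (simp add: gs'_def is_generator_def)
  qed
  moreover have "t \<in> clo ar ops (ar f * K)"
    unfolding t_def by (rule clo.app, rule clo_rename) (use terms block in auto)
  moreover have "map (\<lambda>k. ops f (map (\<lambda>j. generated_tuple (ms j) (gs j) (ts j) ! k) [0..<ar f])) [0..<2 ^ n]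
      = generated_tuple (ar f * K) gs' t"
    unfolding generated_tuple_def t_def
  proof (rule map_cong[OF refl], rule arg_cong[where f = "ops f"], rule map_cong[OF refl])
    fix k j assume k: "k \<in> set [0..<2 ^ n]" and "j \<in> set [0..<ar f]"
    then have j: "j < ar f" by simp
    have args: "map (\<lambda>p. map (\<lambda>p. generator_coord (gs' p) k) [0..<ar f * K] ! (j * K + p)) [0..<ms j]
        = map (\<lambda>p. generator_coord (gs j p) k) [0..<ms j]"
    proof (rule map_cong[OF refl])
      fix p assume "p \<in> set [0..<ms j]"
      then have p: "p < ms j" by simp
      then have "(j * K + p) div K = j" and "(j * K + p) mod K = p"
        using ms_less[OF j] by auto
      then show "map (\<lambda>p. generator_coord (gs' p) k) [0..<ar f * K] ! (j * K + p) = generator_coord (gs j p) k"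
        using block[OF j p] j by (simp add: gs'_def)
    qed
    show "map (\<lambda>k. ts j (map (\<lambda>p. generator_coord (gs j p) k) [0..<ms j])) [0..<2 ^ n] ! k
        = ts j (map (\<lambda>p. map (\<lambda>p. generator_coord (gs' p) k) [0..<ar f * K] ! (j * K + p)) [0..<ms j])"
      using k by (simp add: args)
  qed
  ultimately show ?thesis by blast
qed

lemma Delta_generated:
  assumes "v \<in> \<Delta>"
  obtains m gs t where "\<And>p. is_generator (gs p)" and "t \<in> clo ar ops m"
    and "v = generated_tuple m gs t"
proof -
  from assms have "\<exists>m gs t. (\<forall>p. is_generator (gs p)) \<and> t \<in> clo ar ops m \<and> v = generated_tuple m gs t"
  proof (induction rule: Delta.induct)
    case (gen i a b)
    have "cvec n i a b = generated_tuple 1 (\<lambda>_. (i, a, b)) (\<lambda>xs. xs ! 0)"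
      by (simp add: cvec_def generated_tuple_def generator_coord_def)
    moreover have "(\<lambda>xs. xs ! 0) \<in> clo ar ops 1"
      by (rule clo.proj) simp
    ultimately show ?case
      using gen by (intro exI[of _ 1] exI[of _ "\<lambda>_. (i, a, b)"]) (auto simp: is_generator_def)
  next
    case (app f vs)
    obtain ms gs ts where gens: "\<And>j p. j < ar f \<Longrightarrow> is_generator (gs j p)"
      and terms: "\<And>j. j < ar f \<Longrightarrow> ts j \<in> clo ar ops (ms j)"
      and vs: "\<And>j. j < ar f \<Longrightarrow> vs j = generated_tuple (ms j) (gs j) (ts j)"
      using app.IH by metis
    have eq: "map (\<lambda>k. ops f (map (\<lambda>j. vs j ! k) [0..<ar f])) [0..<2 ^ n]
      = map (\<lambda>k. ops f (map (\<lambda>j. generated_tuple (ms j) (gs j) (ts j) ! k) [0..<ar f])) [0..<2 ^ n]"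
      by (intro map_cong arg_cong[where f = "ops f"] refl) (simp add: vs)
    show ?case
      using generated_tuple_ops[of f gs ts ms, OF gens terms] by (simp only: eq)
  qed
  then show ?thesis using that by blast
qed

text \<open>Block \<open>i\<close> lists every generator, as the constant pair \<open>(x, x)\<close> unless its direction is \<open>i\<close>,
  followed by one extra pair \<open>(x i, y i)\<close>, which is used to make the block nontrivial.\<close>

lemma generator_blocks:
  assumes gens: "\<And>p. is_generator (gs p)" and t: "t \<in> clo ar ops m"
    and xy: "\<And>i. i < n \<Longrightarrow> (x i, y i) \<in> \<alpha> i"
  defines "as \<equiv> \<lambda>i. map (\<lambda>p. fst (snd (gs p))) [0..<m] @ [x i]"
    and "bs \<equiv> \<lambda>i. map (\<lambda>p. if fst (gs p) = i then snd (snd (gs p)) else fst (snd (gs p))) [0..<m] @ [y i]"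
    and "t' \<equiv> \<lambda>xs. t (map (\<lambda>p. xs ! (fst (gs p) * Suc m + p)) [0..<m])"
  shows "related_tuples (\<lambda>_. Suc m) as bs" and "t' \<in> clo ar ops (\<Sum>i<n. Suc m)"
    and "k < 2 ^ n \<Longrightarrow> generated_tuple m gs t ! k = t' (bit_args n as bs k)"
proof -
  have gen_n: "fst (gs p) < n" and gen_alpha: "snd (gs p) \<in> \<alpha> (fst (gs p))" for p
    using gens by (auto simp: is_generator_def)
  have gen_in_A: "fst (snd (gs p)) \<in> A \<and> snd (snd (gs p)) \<in> A" for p
    using alpha_in_A[OF gen_n] gen_alpha by (metis prod.collapse)
  have len: "length (as i) = Suc m" "length (bs i) = Suc m" for i
    by (simp_all add: as_def bs_def)
  have "(as i ! k, bs i ! k) \<in> \<alpha> i" if "i < n" "k < Suc m" for i k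
  proof (cases "k < m")
    case True
    then show ?thesis
      using that gen_alpha[of k] alpha_refl gen_in_A by (auto simp: as_def bs_def nth_append)
  next
    case False
    with that show ?thesis using xy by (simp add: as_def bs_def nth_append)
  qed
  moreover have "set (as i) \<subseteq> A" "set (bs i) \<subseteq> A" if "i < n" for i
    using that xy alpha_in_A gen_in_A by (auto simp: as_def bs_def)
  ultimately show "related_tuples (\<lambda>_. Suc m) as bs"
    using len by (simp add: related_tuples_def)
  have block: "fst (gs p) * Suc m + p < n * Suc m" if "p < m" for p
    using gen_n that by (intro mult_add_less_mult_nat) auto
  then show "t' \<in> clo ar ops (\<Sum>i<n. Suc m)"
    unfolding t'_def by (intro clo_rename[OF t]) simp
  assume k: "k < 2 ^ n"
  have "bit_args n as bs k ! (fst (gs p) * Suc m + p) = generator_coord (gs p) k" if "p < m" for p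
  proof -
    have "bit_args n as bs k ! (fst (gs p) * Suc m + p)
        = (if bit k (fst (gs p)) then bs (fst (gs p)) else as (fst (gs p))) ! p"
      using gen_n that len by (intro nth_bit_args) auto
    then show ?thesis using that by (simp add: as_def bs_def generator_coord_def nth_append)
  qed
  then have args: "map (\<lambda>p. bit_args n as bs k ! (fst (gs p) * Suc m + p)) [0..<m]
      = map (\<lambda>p. generator_coord (gs p) k) [0..<m]"
    by (intro map_cong) auto
  show "generated_tuple m gs t ! k = t' (bit_args n as bs k)"
    using k by (simp add: generated_tuple_def t'_def args del: mult_Suc_right)
qed

lemma Delta_bit_args_representation:
  assumes v: "v \<in> \<Delta>" and nontrivial: "\<And>i. i < n \<Longrightarrow> \<exists>x y. (x, y) \<in> \<alpha> i \<and> x \<noteq> y"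
  obtains ms as bs t where "related_tuples ms as bs" and "\<And>i. i < n \<Longrightarrow> as i \<noteq> bs i"
    and "t \<in> clo ar ops (\<Sum>i<n. ms i)" and "\<And>k. k < 2 ^ n \<Longrightarrow> v ! k = t (bit_args n as bs k)"
proof -
  obtain x y where xy: "\<And>i. i < n \<Longrightarrow> (x i, y i) \<in> \<alpha> i \<and> x i \<noteq> y i"
    using nontrivial by metis
  obtain m gs t where gens: "\<And>p. is_generator (gs p)" and t: "t \<in> clo ar ops m"
    and v_eq: "v = generated_tuple m gs t"
    using Delta_generated[OF v] by metis
  have "\<And>i. i < n \<Longrightarrow> (x i, y i) \<in> \<alpha> i"
    using xy by blast
  note blocks = generator_blocks[OF gens t this]
  let ?as = "\<lambda>i. map (\<lambda>p. fst (snd (gs p))) [0..<m] @ [x i]"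
  let ?bs = "\<lambda>i. map (\<lambda>p. if fst (gs p) = i then snd (snd (gs p)) else fst (snd (gs p))) [0..<m] @ [y i]"
  show ?thesis
  proof (rule that)
    show "related_tuples (\<lambda>_. Suc m) ?as ?bs"
      by (rule blocks(1))
    show "?as i \<noteq> ?bs i" if "i < n" for i
      using xy[OF that] by simp
  qed (use blocks(2,3) v_eq in auto)
qed

end

locale malcev_commutator_setting = commutator_setting +
  assumes malcev: "malcev A ar ops"
begin

definition malcev_op :: "'a list \<Rightarrow> 'a" where
  "malcev_op = (SOME q. q \<in> clo ar ops 3 \<and> (\<forall>x\<in>A. \<forall>y\<in>A. q [x, x, y] = y \<and> q [y, x, x] = y))"

lemma malcev_op: "malcev_op \<in> clo ar ops 3 \<and> (\<forall>x\<in>A. \<forall>y\<in>A. malcev_op [x, x, y] = y \<and> malcev_op [y, x, x] = y)"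
proof -
  have "\<exists>q. q \<in> clo ar ops 3 \<and> (\<forall>x\<in>A. \<forall>y\<in>A. q [x, x, y] = y \<and> q [y, x, x] = y)"
    using malcev by (auto simp: malcev_def)
  then show ?thesis unfolding malcev_op_def by (rule someI_ex)
qed

lemma malcev_op_left: "x \<in> A \<Longrightarrow> y \<in> A \<Longrightarrow> malcev_op [x, x, y] = y"
  using malcev_op by blast

lemma malcev_op_right: "x \<in> A \<Longrightarrow> y \<in> A \<Longrightarrow> malcev_op [y, x, x] = y"
  using malcev_op by blast

lemma Delta_malcev_op:
  assumes "u \<in> \<Delta>" "v \<in> \<Delta>" "w \<in> \<Delta>"
  shows "map (\<lambda>k. malcev_op [u ! k, v ! k, w ! k]) [0..<2 ^ n] \<in> \<Delta>"
proof -
  have "map (\<lambda>k. malcev_op (map (\<lambda>p. [u, v, w] ! p ! k) [0..<3])) [0..<2 ^ n] \<in> \<Delta>"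
    using malcev_op assms by (intro Delta_term) (auto simp: less_Suc_eq numeral_3_eq_3)
  then show ?thesis by (simp add: numeral_3_eq_3 upt_rec)
qed

lemma corner_of_fork:
  assumes c: "c \<in> \<Delta>" and d: "d \<in> \<Delta>" and eq: "\<forall>j<2 ^ n - 1. c ! j = d ! j"
  shows "corner (c ! (2 ^ n - 1)) (d ! (2 ^ n - 1)) \<in> \<Delta>"
proof -
  let ?a = "c ! (2 ^ n - 1)"
  have a: "?a \<in> A" using nth_Delta_in_A[OF c] by simp
  have "map (\<lambda>k. malcev_op [d ! k, c ! k, replicate (2 ^ n) ?a ! k]) [0..<2 ^ n] \<in> \<Delta>"
    using Delta_malcev_op[OF d c replicate_in_Delta[OF a]] .
  moreover have "map (\<lambda>k. malcev_op [d ! k, c ! k, replicate (2 ^ n) ?a ! k]) [0..<2 ^ n]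
      = corner ?a (d ! (2 ^ n - 1))"
    using eq a nth_Delta_in_A[OF c] nth_Delta_in_A[OF d]
    by (intro nth_equalityI) (auto simp: nth_corner malcev_op_left malcev_op_right)
  ultimately show ?thesis by simp
qed

lemma corner_of_periodic:
  assumes v: "v \<in> \<Delta>" and periodic: "\<forall>k<2 ^ (n - 1) - 1. v ! k = v ! (k + 2 ^ (n - 1))"
  shows "corner (v ! (2 ^ (n - 1) - 1)) (v ! (2 ^ n - 1)) \<in> \<Delta>"
proof -
  define h where "h = (2::nat) ^ (n - 1)"
  have N: "(2::nat) ^ n = 2 * h" "0 < h"
    by (simp_all add: h_def exp_eq_double_half)
  let ?c = "map (\<lambda>k. v ! (k mod h)) [0..<2 ^ n]"
  have c: "?c \<in> \<Delta>"
    using Delta_reindex_mod_half[OF v] by (simp add: h_def)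
  have "?c ! j = v ! j" if "j < 2 ^ n - 1" for j
  proof (cases "j < h")
    case True
    then show ?thesis using that N by simp
  next
    case False
    then have "j mod h = j - h" and "j - h < h - 1"
      using that N by (simp_all add: le_mod_geq)
    moreover have "v ! (j - h) = v ! (j - h + h)"
      using periodic[folded h_def] \<open>j - h < h - 1\<close> by blast
    moreover have "j < 2 ^ n" using that by linarith
    ultimately show ?thesis using False by simp
  qed
  moreover have "?c ! (2 ^ n - 1) = v ! (h - 1)"
    using N by (simp add: le_mod_geq)
  ultimately show ?thesis
    using corner_of_fork[OF c v] by (simp add: h_def)
qed

lemma fork_iff_corner:
  assumes a: "a \<in> A"
  shows "(a, b) \<in> fork (2 ^ n) (2 ^ n - 1) \<Delta> \<longleftrightarrow> corner a b \<in> \<Delta>"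
proof
  assume "(a, b) \<in> fork (2 ^ n) (2 ^ n - 1) \<Delta>"
  then obtain c d where "c \<in> \<Delta>" "d \<in> \<Delta>" "c ! (2 ^ n - 1) = a" "d ! (2 ^ n - 1) = b"
    and "\<forall>k<2 ^ n. k \<noteq> 2 ^ n - 1 \<longrightarrow> c ! k = d ! k"
    unfolding fork_def by blast
  then show "corner a b \<in> \<Delta>"
    using corner_of_fork[of c d] by auto
next
  assume "corner a b \<in> \<Delta>"
  moreover have "replicate (2 ^ n) a = corner a a"
    by (simp add: corner_same)
  ultimately show "(a, b) \<in> fork (2 ^ n) (2 ^ n - 1) \<Delta>"
    using replicate_in_Delta[OF a] unfolding fork_def
    by (intro CollectI case_prodI bexI[of _ "corner a a"] bexI[of _ "corner a b"]) (auto simp: nth_corner)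
qed

lemma corner_iff_doubled:
  assumes a: "a \<in> A"
  shows "corner a b \<in> \<Delta> \<longleftrightarrow>
    (\<exists>cs. length cs = 2 ^ (n - 1) - 1 \<and> set cs \<subseteq> A \<and> cs @ [a] @ cs @ [b] \<in> \<Delta>)"
proof -
  define h where "h = (2::nat) ^ (n - 1)"
  have N: "(2::nat) ^ n = 2 * h" "0 < h"
    by (simp_all add: h_def exp_eq_double_half)
  have from_doubled: "corner a b \<in> \<Delta>" if "length cs = h - 1" and v: "cs @ [a] @ cs @ [b] \<in> \<Delta>" for cs
  proof -
    let ?v = "cs @ [a] @ cs @ [b]"
    have "\<forall>k<h - 1. ?v ! k = ?v ! (k + h)"
      using that(1) N by (auto simp: nth_append)
    moreover have "?v ! (h - 1) = a" "?v ! (2 ^ n - 1) = b"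
      using that(1) N by (auto simp: nth_append)
    ultimately show ?thesis
      using corner_of_periodic[OF v] by (simp add: h_def)
  qed
  have doubled: "corner a b = replicate (h - 1) a @ [a] @ replicate (h - 1) a @ [b]"
  proof -
    have "(2::nat) ^ n - 1 = (h - 1) + 1 + (h - 1)" using N by linarith
    then show ?thesis by (simp add: corner_def replicate_add replicate_append_same)
  qed
  show ?thesis
  proof
    assume "corner a b \<in> \<Delta>"
    then show "\<exists>cs. length cs = 2 ^ (n - 1) - 1 \<and> set cs \<subseteq> A \<and> cs @ [a] @ cs @ [b] \<in> \<Delta>"
      using a doubled by (intro exI[of _ "replicate (h - 1) a"]) (auto simp: h_def)
  next
    assume "\<exists>cs. length cs = 2 ^ (n - 1) - 1 \<and> set cs \<subseteq> A \<and> cs @ [a] @ cs @ [b] \<in> \<Delta>"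
    then show "corner a b \<in> \<Delta>"
      using from_doubled by (auto simp: h_def)
  qed
qed

lemma corner_malcev_op:
  assumes "corner x1 y1 \<in> \<Delta>" "corner x2 y2 \<in> \<Delta>" "corner x3 y3 \<in> \<Delta>"
  shows "corner (malcev_op [x1, x2, x3]) (malcev_op [y1, y2, y3]) \<in> \<Delta>"
proof -
  have "map (\<lambda>k. malcev_op [corner x1 y1 ! k, corner x2 y2 ! k, corner x3 y3 ! k]) [0..<2 ^ n]
      = corner (malcev_op [x1, x2, x3]) (malcev_op [y1, y2, y3])"
    by (rule nth_equalityI) (auto simp: nth_corner)
  then show ?thesis
    using Delta_malcev_op[OF assms] by simp
qed

lemma corner_ops:
  assumes "length xs = ar f" and "length ys = ar f"
    and "\<And>j. j < ar f \<Longrightarrow> corner (xs ! j) (ys ! j) \<in> \<Delta>"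
  shows "corner (ops f xs) (ops f ys) \<in> \<Delta>"
proof -
  have row: "map (\<lambda>j. corner (xs ! j) (ys ! j) ! k) [0..<ar f] = (if k = 2 ^ n - 1 then ys else xs)"
    if "k < 2 ^ n" for k
    using that assms(1,2) by (intro nth_equalityI) (auto simp: nth_corner)
  have "map ((!) xs) [0..<ar f] = xs" "map ((!) ys) [0..<ar f] = ys"
    using assms(1,2) map_nth by metis+
  then have "map (\<lambda>k. ops f (map (\<lambda>j. corner (xs ! j) (ys ! j) ! k) [0..<ar f])) [0..<2 ^ n]
      = corner (ops f xs) (ops f ys)"
    by (intro nth_equalityI) (simp_all add: row nth_corner)
  moreover have "map (\<lambda>k. ops f (map (\<lambda>j. corner (xs ! j) (ys ! j) ! k) [0..<ar f])) [0..<2 ^ n] \<in> \<Delta>"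
    using assms(3) by (rule Delta.app)
  ultimately show ?thesis by simp
qed

definition corner_rel :: "'a rel" where
  "corner_rel = {(x, y). x \<in> A \<and> y \<in> A \<and> corner x y \<in> \<Delta>}"

lemma congruence_corner_rel: "congruence A ar ops corner_rel"
  unfolding congruence_def
proof (intro conjI allI impI)
  show "equiv A corner_rel"
  proof (rule equivI)
    show "refl_on A corner_rel"
      by (auto simp: refl_on_def corner_rel_def corner_same replicate_in_Delta)
    show "sym corner_rel"
    proof (rule symI)
      fix x y assume "(x, y) \<in> corner_rel"
      then have "x \<in> A" "y \<in> A" "corner x y \<in> \<Delta>" by (auto simp: corner_rel_def)
      then have "corner (malcev_op [x, x, y]) (malcev_op [x, y, y]) \<in> \<Delta>"
        using corner_malcev_op[of x x] replicate_in_Delta by (simp add: corner_same)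
      then show "(y, x) \<in> corner_rel"
        using \<open>x \<in> A\<close> \<open>y \<in> A\<close> by (simp add: corner_rel_def malcev_op_left malcev_op_right)
    qed
    show "trans corner_rel"
    proof (rule transI)
      fix x y z assume "(x, y) \<in> corner_rel" "(y, z) \<in> corner_rel"
      then have "x \<in> A" "y \<in> A" "z \<in> A" "corner x y \<in> \<Delta>" "corner y z \<in> \<Delta>"
        by (auto simp: corner_rel_def)
      then have "corner (malcev_op [x, y, y]) (malcev_op [y, y, z]) \<in> \<Delta>"
        using corner_malcev_op[of x y y y y z] replicate_in_Delta by (simp add: corner_same)
      then show "(x, z) \<in> corner_rel"
        using \<open>x \<in> A\<close> \<open>y \<in> A\<close> \<open>z \<in> A\<close> by (simp add: corner_rel_def malcev_op_left malcev_op_right)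
    qed
  qed (auto simp: corner_rel_def)
next
  fix f xs ys
  assume "length xs = ar f \<and> length ys = ar f \<and> (\<forall>i<ar f. (xs ! i, ys ! i) \<in> corner_rel)"
  moreover from this have "set xs \<subseteq> A" "set ys \<subseteq> A"
    by (auto simp: corner_rel_def in_set_conv_nth)
  ultimately show "(ops f xs, ops f ys) \<in> corner_rel"
    using corner_ops[of xs f ys] ops_closed by (auto simp: corner_rel_def)
qed

definition copy_lower :: "'a list \<Rightarrow> nat \<Rightarrow> 'a list" where
  "copy_lower u K = map (\<lambda>j. if 2 ^ (n - 1) \<le> j \<and> j < 2 ^ (n - 1) + K then u ! (j - 2 ^ (n - 1)) else u ! j)
     [0..<2 ^ n]"

text \<open>Step \<open>K\<close> overwrites coordinate \<open>K + 2 ^ (n - 1)\<close> by \<open>u ! K\<close>: it applies the Mal'cev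
  operation to the current tuple, to a copy of \<open>corner (u ! K) (u ! (K + 2 ^ (n - 1)))\<close> whose special
  coordinate has been moved to \<open>K + 2 ^ (n - 1)\<close>, and to the constant tuple \<open>u ! K\<close>.\<close>

lemma copy_lower_in_Delta:
  assumes u: "u \<in> \<Delta>" and "K < 2 ^ (n - 1)"
    and "\<forall>k<K. (u ! k, u ! (k + 2 ^ (n - 1))) \<in> corner_rel"
  shows "copy_lower u K \<in> \<Delta>"
  using assms(2,3)
proof (induction K)
  case 0
  have "copy_lower u 0 = u"
    using length_Delta[OF u] by (intro nth_equalityI) (auto simp: copy_lower_def)
  then show ?case using u by simp
next
  case (Suc K)
  define h where "h = (2::nat) ^ (n - 1)"
  let ?x = "u ! K" and ?y = "u ! (K + h)"
  have IH: "copy_lower u K \<in> \<Delta>" using Suc by simp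
  have xy: "corner ?x ?y \<in> \<Delta>" "?x \<in> A" using Suc.prems by (auto simp: corner_rel_def h_def)
  have Kh: "K + h < 2 ^ n" using Suc.prems(1) exp_eq_double_half by (simp add: h_def)
  define d where "d = xor (2 ^ n - 1) (K + h)"
  have d: "d < 2 ^ n" unfolding d_def using Kh by (intro xor_less_exp_nat) auto
  let ?z = "map (\<lambda>j. corner ?x ?y ! xor j d) [0..<2 ^ n]"
  have z_nth: "corner ?x ?y ! xor j d = (if j = K + h then ?y else ?x)" if "j < 2 ^ n" for j
    using xor_less_exp_nat[OF that d] that by (simp add: nth_corner d_def xor_xor_eq_left_iff)
  have step: "malcev_op [copy_lower u K ! j, corner ?x ?y ! xor j d, ?x] = copy_lower u (Suc K) ! j"
    if j: "j < 2 ^ n" for j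
  proof (cases "j = K + h")
    case True
    then show ?thesis
      using j z_nth xy(2) nth_Delta_in_A[OF u Kh] by (simp add: copy_lower_def h_def malcev_op_left)
  next
    case False
    then show ?thesis
      using j z_nth xy(2) nth_Delta_in_A[OF IH j] by (auto simp: copy_lower_def h_def malcev_op_right)
  qed
  have "map (\<lambda>j. malcev_op [copy_lower u K ! j, ?z ! j, replicate (2 ^ n) ?x ! j]) [0..<2 ^ n] \<in> \<Delta>"
    by (rule Delta_malcev_op[OF IH Delta_reindex_xor[OF d xy(1)] replicate_in_Delta[OF xy(2)]])
  moreover have "map (\<lambda>j. malcev_op [copy_lower u K ! j, ?z ! j, replicate (2 ^ n) ?x ! j]) [0..<2 ^ n]
      = copy_lower u (Suc K)"
    by (intro nth_equalityI) (simp_all add: step copy_lower_def[of u "Suc K"])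
  ultimately show ?case by simp
qed

lemma corner_rel_last_pair:
  assumes u: "u \<in> \<Delta>" and rel: "\<forall>k<2 ^ (n - 1) - 1. (u ! k, u ! (k + 2 ^ (n - 1))) \<in> corner_rel"
  shows "(u ! (2 ^ (n - 1) - 1), u ! (2 ^ n - 1)) \<in> corner_rel"
proof -
  define h where "h = (2::nat) ^ (n - 1)"
  have N: "(2::nat) ^ n = 2 * h" "0 < h"
    by (simp_all add: h_def exp_eq_double_half)
  let ?w = "copy_lower u (h - 1)"
  have w: "?w \<in> \<Delta>"
    using copy_lower_in_Delta[OF u _ rel] by (simp add: h_def)
  have w_nth: "?w ! j = (if h \<le> j \<and> j < h + (h - 1) then u ! (j - h) else u ! j)" if "j < 2 ^ n" for j
    using that by (simp add: copy_lower_def h_def)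
  have "\<forall>k<h - 1. ?w ! k = ?w ! (k + h)"
    using w_nth N by auto
  then have "corner (?w ! (h - 1)) (?w ! (2 ^ n - 1)) \<in> \<Delta>"
    using corner_of_periodic[OF w] by (simp add: h_def)
  moreover have "?w ! (h - 1) = u ! (h - 1)" "?w ! (2 ^ n - 1) = u ! (2 ^ n - 1)"
    using w_nth N by auto
  moreover have "u ! (h - 1) \<in> A" "u ! (2 ^ n - 1) \<in> A"
    using nth_Delta_in_A[OF u] N by auto
  ultimately show ?thesis by (simp add: corner_rel_def h_def)
qed

lemma centralizes_corner_rel: "centralizes A ar ops n \<alpha> corner_rel"
proof (rule centralizesI)
  fix ms as bs t
  assume rel: "related_tuples ms as bs" and t: "t \<in> clo ar ops (\<Sum>i<n. ms i)"
    and hyp: "\<And>s. \<exists>i<n - 1. \<not> s i \<Longrightarrow>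
      (t (comm_args n as bs s (as (n - 1))), t (comm_args n as bs s (bs (n - 1)))) \<in> corner_rel"
  define h where "h = (2::nat) ^ (n - 1)"
  have N: "(2::nat) ^ n = 2 * h" "0 < h"
    by (simp_all add: h_def exp_eq_double_half)
  define u where "u = map (\<lambda>k. t (bit_args n as bs k)) [0..<2 ^ n]"
  have u: "u \<in> \<Delta>"
    unfolding u_def using rel t by (rule bit_args_term_in_Delta)
  have lower: "u ! k = t (comm_args n as bs s (as (n - 1)))"
    and upper: "u ! (k + h) = t (comm_args n as bs s (bs (n - 1)))"
    if "k < h" and "\<forall>i<n - 1. bit k i \<longleftrightarrow> s i" for k s
    using that bit_args_lower_half[of k n s as bs] bit_args_upper_half[of k n s as bs] N
    by (auto simp: u_def h_def)
  have "(u ! k, u ! (k + h)) \<in> corner_rel" if k: "k < h - 1" for k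
  proof -
    have "\<not> (\<forall>i<n - 1. bit k i)"
      using k all_bits_iff_eq_exp_minus_1[of k "n - 1"] by (auto simp: h_def)
    then show ?thesis
      using hyp[of "bit k"] lower[of k "bit k"] upper[of k "bit k"] k by auto
  qed
  then have "(u ! (h - 1), u ! (2 ^ n - 1)) \<in> corner_rel"
    using corner_rel_last_pair[OF u] by (simp add: h_def)
  moreover have "\<forall>i<n - 1. bit (h - 1) i"
    using all_bits_iff_eq_exp_minus_1[of "h - 1" "n - 1"] N by (simp add: h_def)
  moreover have "(2::nat) ^ n - 1 = h - 1 + h"
    using N by linarith
  ultimately show "(t (comm_args n as bs (\<lambda>_. True) (as (n - 1))),
      t (comm_args n as bs (\<lambda>_. True) (bs (n - 1)))) \<in> corner_rel"
    using lower[of "h - 1" "\<lambda>_. True"] upper[of "h - 1" "\<lambda>_. True"] N by simp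
qed

lemma commutator_subset_corner_rel: "commutator A ar ops n \<alpha> \<subseteq> corner_rel"
  unfolding commutator_def using congruence_corner_rel centralizes_corner_rel by blast

lemma corner_in_commutator:
  assumes a: "a \<in> A" and v: "corner a b \<in> \<Delta>"
  shows "(a, b) \<in> commutator A ar ops n \<alpha>"
  unfolding commutator_def
proof (rule InterI, clarify)
  fix \<gamma> assume "congruence A ar ops \<gamma>" and central: "centralizes A ar ops n \<alpha> \<gamma>"
  then have refl: "(a, a) \<in> \<gamma>"
    using a by (auto simp: congruence_def equiv_def refl_on_def)
  show "(a, b) \<in> \<gamma>"
  proof (cases "\<exists>i0<n. \<alpha> i0 \<subseteq> Id")
    case True
    then show ?thesis using corner_eq_if_alpha_trivial v refl by blast
  next
    case False
    then have "\<exists>x y. (x, y) \<in> \<alpha> i \<and> x \<noteq> y" if "i < n" for i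
      using that by auto
    then obtain ms as bs t where rel: "related_tuples ms as bs" and distinct: "\<And>i. i < n \<Longrightarrow> as i \<noteq> bs i"
      and t: "t \<in> clo ar ops (\<Sum>i<n. ms i)" and coords: "\<And>k. k < 2 ^ n \<Longrightarrow> corner a b ! k = t (bit_args n as bs k)"
      using Delta_bit_args_representation[OF v] by metis
    have corner_value: "t (comm_args n as bs s (if e then bs (n - 1) else as (n - 1)))
        = (if (\<forall>i<n - 1. s i) \<and> e then b else a)" for s e
    proof -
      obtain k where k: "k < 2 ^ n" and last: "k = 2 ^ n - 1 \<longleftrightarrow> (\<forall>i<n - 1. s i) \<and> e"
        and args: "comm_args n as bs s (if e then bs (n - 1) else as (n - 1)) = bit_args n as bs k"
        using comm_args_as_bit_args[OF n_ge_1] by blast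
      have "t (bit_args n as bs k) = corner a b ! k"
        using coords[OF k] by simp
      then show ?thesis using k last args by (simp add: nth_corner)
    qed
    have "(t (comm_args n as bs (\<lambda>_. True) (as (n - 1))), t (comm_args n as bs (\<lambda>_. True) (bs (n - 1)))) \<in> \<gamma>"
      using central rel distinct t
    proof (rule centralizesD)
      fix s :: "nat \<Rightarrow> bool" assume "\<exists>i<n - 1. \<not> s i"
      then show "(t (comm_args n as bs s (as (n - 1))), t (comm_args n as bs s (bs (n - 1)))) \<in> \<gamma>"
        using corner_value[of s False] corner_value[of s True] refl by auto
    qed
    then show ?thesis
      using corner_value[of "\<lambda>_. True" False] corner_value[of "\<lambda>_. True" True] by simp
  qed
qed

end

theorem mainTheorem7:
  fixes A :: "'a set" and ar :: "'f \<Rightarrow> nat" and ops :: "'f \<Rightarrow> 'a list \<Rightarrow> 'a"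
    and n :: nat and \<alpha> :: "nat \<Rightarrow> 'a rel" and a b :: 'a
  assumes "malcev A ar ops"
    and "n \<ge> 1"
    and "\<And>i. i < n \<Longrightarrow> congruence A ar ops (\<alpha> i)"
    and "a \<in> A" and "b \<in> A"
  shows "((a, b) \<in> fork (2 ^ n) (2 ^ n - 1) (Delta ar ops n \<alpha>)
            \<longleftrightarrow> replicate (2 ^ n - 1) a @ [b] \<in> Delta ar ops n \<alpha>)
       \<and> (replicate (2 ^ n - 1) a @ [b] \<in> Delta ar ops n \<alpha>
            \<longleftrightarrow> (\<exists>cs. length cs = 2 ^ (n - 1) - 1 \<and> set cs \<subseteq> A \<and>
                    cs @ [a] @ cs @ [b] \<in> Delta ar ops n \<alpha>))
       \<and> ((\<exists>cs. length cs = 2 ^ (n - 1) - 1 \<and> set cs \<subseteq> A \<and>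
                    cs @ [a] @ cs @ [b] \<in> Delta ar ops n \<alpha>)
            \<longleftrightarrow> (a, b) \<in> commutator A ar ops n \<alpha>)"
proof -
  interpret malcev_commutator_setting A ar ops n \<alpha>
    using assms(1-3) by unfold_locales (auto simp: malcev_def)
  have "corner a b \<in> Delta ar ops n \<alpha> \<longleftrightarrow> (a, b) \<in> commutator A ar ops n \<alpha>"
    using corner_in_commutator[OF assms(4)] commutator_subset_corner_rel by (auto simp: corner_rel_def)
  then show ?thesis
    using fork_iff_corner[OF assms(4)] corner_iff_doubled[OF assms(4)] by (simp add: corner_def)
qed

end
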